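(* Let $M$ be a model of $PA^-$ of cardinality $\aleph_1$ which is Diophantine correct (i.e. $M$ satisfies every universal LA-sentence true in $\mathbb{N}$), and let $D$ be a regular filter on $\omega$. Then $M$ can be embedded (as an LA-structure) into the reduced power $\mathbb{N}^{\omega}/D$.
   Context: LA is the first-order language with non-logical symbols $+,\cdot,0,1,\leq$; $\mathbb{N}$ is the standard LA-structure. $PA^-$ is the theory of nonnegative parts of discretely ordered rings, axiomatized by: associativity and commutativity of $+$ and $\cdot$; distributivity $x\cdot(y+z)=x\cdot y+x\cdot z$; $x+0=x$, $x\cdot 0=0$, $x\cdot 1=x$; $\leq$ is a reflexive linear order with $<$ transitive and $x<y\vee x=y\vee y<x$ (where $x<y$ abbreviates $x\le y\wedge x\ne y$); $x<y\to x+z<y+z$; $0<z\wedge x<y\to x\cdot z<y\cdot z$; $x<y\to\exists z(x+z=y)$; $0<1$ and $x>0\to x\geq 1$; $x\geq 0$. A filter $D$ on $\omega$ is regular if there is a family $\{A_n\}_{n\in\omega}\subseteq D$ such that every element of $\omega$ belongs to only finitely many $A_n$. The reduced power $\mathbb{N}^\omega/D$ has as elements the classes of functions $f:\omega\to\mathbb{N}$ modulo $f\sim g$ iff $\{n: f(n)=g(n)\}\in D$, with $+,\cdot$ defined pointwise, $0,1$ the classes of constant functions, and $[f]\le[g]$ iff $\{n:f(n)\le g(n)\}\in D$. An embedding is an injective map preserving $0,1,+,\cdot$ and $\leq$. *)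

theory Defs
  imports Main
begin

record 'a la_struct =
  carrier :: "'a set"
  add :: "'a \<Rightarrow> 'a \<Rightarrow> 'a"
  mul :: "'a \<Rightarrow> 'a \<Rightarrow> 'a"
  zero :: 'a
  one :: 'a
  le :: "'a \<Rightarrow> 'a \<Rightarrow> bool"

definition lt :: "('a, 'b) la_struct_scheme \<Rightarrow> 'a \<Rightarrow> 'a \<Rightarrow> bool" where
  "lt M x y \<longleftrightarrow> le M x y \<and> x \<noteq> y"

definition Nat_struct :: "nat la_struct" where
  "Nat_struct = \<lparr>carrier = UNIV, add = (+), mul = (*), zero = 0, one = 1, le = (\<le>)\<rparr>"

definition PA_minus_model :: "('a, 'b) la_struct_scheme \<Rightarrow> bool" where
  "PA_minus_model M \<longleftrightarrow>
     zero M \<in> carrier M \<and> one M \<in> carrier M \<and>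
     (\<forall>x\<in>carrier M. \<forall>y\<in>carrier M. add M x y \<in> carrier M \<and> mul M x y \<in> carrier M) \<and>
     (\<forall>x\<in>carrier M. \<forall>y\<in>carrier M. \<forall>z\<in>carrier M.
        add M (add M x y) z = add M x (add M y z) \<and>
        mul M (mul M x y) z = mul M x (mul M y z) \<and>
        mul M x (add M y z) = add M (mul M x y) (mul M x z)) \<and>
     (\<forall>x\<in>carrier M. \<forall>y\<in>carrier M. add M x y = add M y x \<and> mul M x y = mul M y x) \<and>
     (\<forall>x\<in>carrier M. add M x (zero M) = x \<and> mul M x (zero M) = zero M \<and> mul M x (one M) = x) \<and>
     (\<forall>x\<in>carrier M. le M x x) \<and>
     (\<forall>x\<in>carrier M. \<forall>y\<in>carrier M. \<forall>z\<in>carrier M. lt M x y \<and> lt M y z \<longrightarrow> lt M x z) \<and>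
     (\<forall>x\<in>carrier M. \<forall>y\<in>carrier M. lt M x y \<or> x = y \<or> lt M y x) \<and>
     (\<forall>x\<in>carrier M. \<forall>y\<in>carrier M. \<forall>z\<in>carrier M. lt M x y \<longrightarrow> lt M (add M x z) (add M y z)) \<and>
     (\<forall>x\<in>carrier M. \<forall>y\<in>carrier M. \<forall>z\<in>carrier M.
        lt M (zero M) z \<and> lt M x y \<longrightarrow> lt M (mul M x z) (mul M y z)) \<and>
     (\<forall>x\<in>carrier M. \<forall>y\<in>carrier M. lt M x y \<longrightarrow> (\<exists>z\<in>carrier M. add M x z = y)) \<and>
     lt M (zero M) (one M) \<and>
     (\<forall>x\<in>carrier M. lt M (zero M) x \<longrightarrow> le M (one M) x) \<and>
     (\<forall>x\<in>carrier M. le M (zero M) x)"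

datatype la_term = Var nat | Zero | One | Plus la_term la_term | Times la_term la_term

datatype la_form =
    Eq la_term la_term
  | Le la_term la_term
  | FFalse
  | Neg la_form
  | Conj la_form la_form
  | Disj la_form la_form
  | Imp la_form la_form
  | All nat la_form
  | Ex nat la_form

fun tvars :: "la_term \<Rightarrow> nat set" where
  "tvars (Var i) = {i}"
| "tvars Zero = {}"
| "tvars One = {}"
| "tvars (Plus s t) = tvars s \<union> tvars t"
| "tvars (Times s t) = tvars s \<union> tvars t"

fun fvars :: "la_form \<Rightarrow> nat set" where
  "fvars (Eq s t) = tvars s \<union> tvars t"
| "fvars (Le s t) = tvars s \<union> tvars t"
| "fvars FFalse = {}"
| "fvars (Neg p) = fvars p"
| "fvars (Conj p q) = fvars p \<union> fvars q"
| "fvars (Disj p q) = fvars p \<union> fvars q"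
| "fvars (Imp p q) = fvars p \<union> fvars q"
| "fvars (All x p) = fvars p - {x}"
| "fvars (Ex x p) = fvars p - {x}"

fun teval :: "('a, 'b) la_struct_scheme \<Rightarrow> (nat \<Rightarrow> 'a) \<Rightarrow> la_term \<Rightarrow> 'a" where
  "teval M e (Var i) = e i"
| "teval M e Zero = zero M"
| "teval M e One = one M"
| "teval M e (Plus s t) = add M (teval M e s) (teval M e t)"
| "teval M e (Times s t) = mul M (teval M e s) (teval M e t)"

fun sat :: "('a, 'b) la_struct_scheme \<Rightarrow> (nat \<Rightarrow> 'a) \<Rightarrow> la_form \<Rightarrow> bool" where
  "sat M e (Eq s t) = (teval M e s = teval M e t)"
| "sat M e (Le s t) = le M (teval M e s) (teval M e t)"
| "sat M e FFalse = False"
| "sat M e (Neg p) = (\<not> sat M e p)"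
| "sat M e (Conj p q) = (sat M e p \<and> sat M e q)"
| "sat M e (Disj p q) = (sat M e p \<or> sat M e q)"
| "sat M e (Imp p q) = (sat M e p \<longrightarrow> sat M e q)"
| "sat M e (All x p) = (\<forall>a\<in>carrier M. sat M (e(x := a)) p)"
| "sat M e (Ex x p) = (\<exists>a\<in>carrier M. sat M (e(x := a)) p)"

definition true_in :: "('a, 'b) la_struct_scheme \<Rightarrow> la_form \<Rightarrow> bool" where
  "true_in M p \<longleftrightarrow> (\<forall>e. (\<forall>i. e i \<in> carrier M) \<longrightarrow> sat M e p)"

fun qfree :: "la_form \<Rightarrow> bool" where
  "qfree (All x p) = False"
| "qfree (Ex x p) = False"
| "qfree (Neg p) = qfree p"
| "qfree (Conj p q) = (qfree p \<and> qfree q)"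
| "qfree (Disj p q) = (qfree p \<and> qfree q)"
| "qfree (Imp p q) = (qfree p \<and> qfree q)"
| "qfree _ = True"

fun universal :: "la_form \<Rightarrow> bool" where
  "universal (All x p) = universal p"
| "universal p = qfree p"

definition universal_sentence :: "la_form \<Rightarrow> bool" where
  "universal_sentence p \<longleftrightarrow> universal p \<and> fvars p = {}"

definition diophantine_correct :: "('a, 'b) la_struct_scheme \<Rightarrow> bool" where
  "diophantine_correct M \<longleftrightarrow>
     (\<forall>p. universal_sentence p \<and> true_in Nat_struct p \<longrightarrow> true_in M p)"

definition has_card_aleph1 :: "'a set \<Rightarrow> bool" where
  "has_card_aleph1 A \<longleftrightarrow> ordIso2 (card_of A) (cardSuc natLeq)"

definition is_filter :: "nat set set \<Rightarrow> bool" where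
  "is_filter D \<longleftrightarrow> UNIV \<in> D \<and> {} \<notin> D \<and>
     (\<forall>A\<in>D. \<forall>B\<in>D. A \<inter> B \<in> D) \<and>
     (\<forall>A B. A \<in> D \<and> A \<subseteq> B \<longrightarrow> B \<in> D)"

definition regular_filter :: "nat set set \<Rightarrow> bool" where
  "regular_filter D \<longleftrightarrow> is_filter D \<and>
     (\<exists>A :: nat \<Rightarrow> nat set. (\<forall>n. A n \<in> D) \<and> (\<forall>i. finite {n. i \<in> A n}))"

text \<open>Elements of the reduced power N^omega/D are the classes of the relation rp_eq D;
  its operations are pointwise, so the operations on classes are induced by those below.\<close>
definition rp_eq :: "nat set set \<Rightarrow> (nat \<Rightarrow> nat) \<Rightarrow> (nat \<Rightarrow> nat) \<Rightarrow> bool" where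
  "rp_eq D f g \<longleftrightarrow> {n. f n = g n} \<in> D"

definition rp_le :: "nat set set \<Rightarrow> (nat \<Rightarrow> nat) \<Rightarrow> (nat \<Rightarrow> nat) \<Rightarrow> bool" where
  "rp_le D f g \<longleftrightarrow> {n. f n \<le> g n} \<in> D"

text \<open>h picks a representative of the class [h x]; the induced map x \<mapsto> [h x] into
  N^omega/D is an embedding of LA-structures.\<close>
definition embeds_into_reduced_power ::
    "('a, 'b) la_struct_scheme \<Rightarrow> nat set set \<Rightarrow> ('a \<Rightarrow> nat \<Rightarrow> nat) \<Rightarrow> bool" where
  "embeds_into_reduced_power M D h \<longleftrightarrow>
     (\<forall>x\<in>carrier M. \<forall>y\<in>carrier M. rp_eq D (h x) (h y) \<longrightarrow> x = y) \<and>
     rp_eq D (h (zero M)) (\<lambda>n. 0) \<and>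
     rp_eq D (h (one M)) (\<lambda>n. 1) \<and>
     (\<forall>x\<in>carrier M. \<forall>y\<in>carrier M.
        rp_eq D (h (add M x y)) (\<lambda>n. h x n + h y n) \<and>
        rp_eq D (h (mul M x y)) (\<lambda>n. h x n * h y n) \<and>
        (le M x y \<longleftrightarrow> rp_le D (h x) (h y)))"

end

theory Submission
  imports Defs "HOL-Library.Countable_Set_Type"
begin

text \<open>The embedding is the union of a chain of partial maps F from M into N^omega that preserve
  existential formulas coordinatewise: whenever M satisfies an existential formula with parameters
  in dom F, the set of coordinates i at which N satisfies it, with the parameters read as the i-th
  coordinates of their images, lies in D. For the empty map this is Diophantine correctness, and
  the property passes to unions of chains. A map with countable domain extends to any further
  element a: enumerate the countably many conditions over dom F and a that hold in M, and at
  coordinate i give a a value satisfying the first m i of them simultaneously, where regularity of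
  D makes each fixed condition lie below m i for D-almost all i. Since M has size aleph_1, it has a
  well-order whose proper initial segments are countable, so Zorn's lemma applied to maps defined
  on initial segments yields a total map; preserving atomic formulas and their negations, it is an
  embedding.\<close>

unbundle cardinal_syntax

instance la_term :: countable by countable_datatype
instance la_form :: countable by countable_datatype

fun trename :: "(nat \<Rightarrow> nat) \<Rightarrow> la_term \<Rightarrow> la_term" where
  "trename r (Var i) = Var (r i)"
| "trename r Zero = Zero"
| "trename r One = One"
| "trename r (Plus s t) = Plus (trename r s) (trename r t)"
| "trename r (Times s t) = Times (trename r s) (trename r t)"

text \<open>Renaming is only meant for quantifier-free formulas; quantified ones are left unchanged.\<close>
fun frename :: "(nat \<Rightarrow> nat) \<Rightarrow> la_form \<Rightarrow> la_form" where
  "frename r (Eq s t) = Eq (trename r s) (trename r t)"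
| "frename r (Le s t) = Le (trename r s) (trename r t)"
| "frename r FFalse = FFalse"
| "frename r (Neg p) = Neg (frename r p)"
| "frename r (Conj p q) = Conj (frename r p) (frename r q)"
| "frename r (Disj p q) = Disj (frename r p) (frename r q)"
| "frename r (Imp p q) = Imp (frename r p) (frename r q)"
| "frename r (All x p) = All x p"
| "frename r (Ex x p) = Ex x p"

lemma teval_trename: "teval M e (trename r t) = teval M (e \<circ> r) t"
  by (induction t) auto

lemma sat_frename: "qfree p \<Longrightarrow> sat M e (frename r p) = sat M (e \<circ> r) p"
  by (induction p) (auto simp: teval_trename)

lemma qfree_frename: "qfree p \<Longrightarrow> qfree (frename r p)"
  by (induction p) auto

lemma finite_tvars: "finite (tvars t)"
  by (induction t) auto

lemma finite_fvars: "finite (fvars p)"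
  by (induction p) (auto simp: finite_tvars)

lemma teval_cong: "(\<And>v. v \<in> tvars t \<Longrightarrow> e v = e' v) \<Longrightarrow> teval M e t = teval M e' t"
  by (induction t) auto

lemma sat_cong: "(\<And>v. v \<in> fvars p \<Longrightarrow> e v = e' v) \<Longrightarrow> sat M e p = sat M e' p"
proof (induction p arbitrary: e e')
  case (Eq s t)
  show ?case
    using Eq teval_cong[of s e e' M] teval_cong[of t e e' M] by simp
next
  case (Le s t)
  show ?case
    using Le teval_cong[of s e e' M] teval_cong[of t e e' M] by simp
next
  case (Neg p)
  show ?case
    using Neg.prems Neg.IH[of e e'] by simp
next
  case (Conj p q)
  show ?case
    using Conj.prems Conj.IH(1)[of e e'] Conj.IH(2)[of e e'] by simp
next
  case (Disj p q)
  show ?case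
    using Disj.prems Disj.IH(1)[of e e'] Disj.IH(2)[of e e'] by simp
next
  case (Imp p q)
  show ?case
    using Imp.prems Imp.IH(1)[of e e'] Imp.IH(2)[of e e'] by simp
next
  case (All x p)
  have "sat M (e(x := a)) p = sat M (e'(x := a)) p" for a
    by (rule All.IH) (use All.prems in auto)
  then show ?case by simp
next
  case (Ex x p)
  have "sat M (e(x := a)) p = sat M (e'(x := a)) p" for a
    by (rule Ex.IH) (use Ex.prems in auto)
  then show ?case by simp
qed simp

definition Conjs :: "la_form list \<Rightarrow> la_form" where
  "Conjs ps = foldr Conj ps (Eq Zero Zero)"

lemma sat_Conjs: "sat M e (Conjs ps) \<longleftrightarrow> (\<forall>p\<in>set ps. sat M e p)"
  by (induction ps) (auto simp: Conjs_def)

lemma qfree_Conjs: "(\<And>p. p \<in> set ps \<Longrightarrow> qfree p) \<Longrightarrow> qfree (Conjs ps)"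
  by (induction ps) (auto simp: Conjs_def)

lemma sat_Conjs_frename:
  assumes "\<And>k. k \<in> set ks \<Longrightarrow> qfree (\<theta>s k)"
  shows "sat M e (Conjs (map (\<lambda>k. frename (r k) (\<theta>s k)) ks)) \<longleftrightarrow> (\<forall>k\<in>set ks. sat M (e \<circ> r k) (\<theta>s k))"
  using assms by (auto simp: sat_Conjs sat_frename)

lemma fvars_foldr_All: "fvars (foldr All vs p) = fvars p - set vs"
  by (induction vs) auto

lemma universal_foldr_All: "universal (foldr All vs p) = universal p"
  by (induction vs) auto

lemma sat_foldr_All_imp_sat:
  assumes "sat M e (foldr All vs p)" "\<forall>v. e v \<in> carrier M"
  shows "sat M e p"
  using assms
proof (induction vs arbitrary: e)
  case (Cons x vs)
  from Cons.prems(1) have "\<forall>a\<in>carrier M. sat M (e(x := a)) (foldr All vs p)" by simp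
  then have "sat M (e(x := e x)) (foldr All vs p)" using Cons.prems(2) by blast
  with Cons show ?case by simp
qed simp

lemma sat_Nat_foldr_All: "(\<And>e. sat Nat_struct e p) \<Longrightarrow> sat Nat_struct e (foldr All vs p)"
  by (induction vs arbitrary: e) (auto simp: Nat_struct_def)

text \<open>Otherwise the universal closure of the negation is a universal sentence true in N but
  false in M.\<close>
lemma diophantine_correct_sat_Nat:
  assumes "diophantine_correct M" "qfree \<theta>" "\<forall>v. e v \<in> carrier M" "sat M e \<theta>"
  shows "\<exists>e'. sat Nat_struct e' \<theta>"
proof (rule ccontr)
  assume unsat: "\<nexists>e'. sat Nat_struct e' \<theta>"
  define \<sigma> where "\<sigma> = foldr All (sorted_list_of_set (fvars \<theta>)) (Neg \<theta>)"
  have "universal_sentence \<sigma>"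
    using assms(2) by (simp add: \<sigma>_def universal_sentence_def fvars_foldr_All universal_foldr_All finite_fvars)
  moreover have "true_in Nat_struct \<sigma>"
    using unsat by (auto simp: true_in_def \<sigma>_def intro: sat_Nat_foldr_All)
  ultimately have "true_in M \<sigma>"
    using assms(1) by (auto simp: diophantine_correct_def)
  then have "sat M e \<sigma>"
    using assms(3) by (simp add: true_in_def)
  then have "sat M e (Neg \<theta>)"
    using assms(3) sat_foldr_All_imp_sat unfolding \<sigma>_def by blast
  with assms(4) show False by simp
qed

lemma filter_superset: "is_filter D \<Longrightarrow> X \<in> D \<Longrightarrow> X \<subseteq> Y \<Longrightarrow> Y \<in> D"
  unfolding is_filter_def by blast

lemma filter_Int_subset: "is_filter D \<Longrightarrow> X \<in> D \<Longrightarrow> Y \<in> D \<Longrightarrow> X \<inter> Y \<subseteq> Z \<Longrightarrow> Z \<in> D"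
  unfolding is_filter_def by blast

lemma filter_disjoint:
  assumes "is_filter D" "X \<in> D" "Y \<in> D" "X \<inter> Y = {}"
  shows False
proof -
  have "X \<inter> Y \<in> D"
    using assms(1-3) unfolding is_filter_def by blast
  with assms(1,4) show False
    unfolding is_filter_def by blast
qed

text \<open>Take for m i the largest n with i in A n and Y n, where A witnesses regularity: it exists
  because i lies in only finitely many A n.\<close>
lemma regular_filter_diagonal:
  assumes reg: "regular_filter D" and Y: "\<And>n. Y n \<in> D"
  obtains m :: "nat \<Rightarrow> nat" where "\<And>n. {i. n \<le> m i \<and> i \<in> Y (m i)} \<in> D"
proof -
  have fil: "is_filter D"
    using reg unfolding regular_filter_def by blast
  obtain A :: "nat \<Rightarrow> nat set" where A: "\<forall>n. A n \<in> D" "\<forall>i. finite {n. i \<in> A n}"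
    using reg unfolding regular_filter_def by blast
  define J where "J i = {n. i \<in> A n \<and> i \<in> Y n}" for i
  have "A n \<inter> Y n \<subseteq> {i. n \<le> Max (J i) \<and> i \<in> Y (Max (J i))}" for n
  proof
    fix i assume "i \<in> A n \<inter> Y n"
    then have n: "n \<in> J i"
      by (simp add: J_def)
    have "J i \<subseteq> {n. i \<in> A n}"
      by (auto simp: J_def)
    then have "finite (J i)"
      using A(2) finite_subset by blast
    then have "n \<le> Max (J i)" "Max (J i) \<in> J i"
      using n by (auto intro: Max_ge Max_in)
    then show "i \<in> {i. n \<le> Max (J i) \<and> i \<in> Y (Max (J i))}"
      by (simp add: J_def)
  qed
  then have "{i. n \<le> Max (J i) \<and> i \<in> Y (Max (J i))} \<in> D" for n
    using filter_Int_subset[OF fil A(1)[rule_format] Y] by blast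
  then show thesis
    by (rule that)
qed

section \<open>Maps preserving existential formulas\<close>

text \<open>An existential formula with parameters is given by a quantifier-free \<theta> and a finite set P
  of parameter variables, all other variables being existentially quantified. sat_over M T \<theta> e P
  says that e witnesses it in M with parameters from T; solutions F e P \<theta> is the set of
  coordinates i at which it has a witness in N when each parameter e v is read as the i-th
  coordinate of some F-image of e v.\<close>
definition sat_over :: "('a, 'b) la_struct_scheme \<Rightarrow> 'a set \<Rightarrow> la_form \<Rightarrow> (nat \<Rightarrow> 'a) \<Rightarrow> nat set \<Rightarrow> bool" where
  "sat_over M T \<theta> e P \<longleftrightarrow>
     qfree \<theta> \<and> finite P \<and> (\<forall>v. e v \<in> carrier M) \<and> e ` P \<subseteq> T \<and> sat M e \<theta>"

definition solutions :: "('a \<times> (nat \<Rightarrow> nat)) set \<Rightarrow> (nat \<Rightarrow> 'a) \<Rightarrow> nat set \<Rightarrow> la_form \<Rightarrow> nat set" where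
  "solutions F e P \<theta> = {i. \<exists>g. (\<forall>v\<in>P. (e v, g v) \<in> F) \<and> sat Nat_struct (\<lambda>v. g v i) \<theta>}"

definition preserves_existentials ::
    "('a, 'b) la_struct_scheme \<Rightarrow> nat set set \<Rightarrow> ('a \<times> (nat \<Rightarrow> nat)) set \<Rightarrow> bool" where
  "preserves_existentials M D F \<longleftrightarrow>
     (\<forall>\<theta> e P. sat_over M (Domain F) \<theta> e P \<longrightarrow> solutions F e P \<theta> \<in> D)"

lemma solutions_cong: "(\<And>v. v \<in> P \<Longrightarrow> e v = e' v) \<Longrightarrow> solutions F e P \<theta> = solutions F e' P \<theta>"
  by (simp add: solutions_def)

lemma solutions_mono: "F \<subseteq> G \<Longrightarrow> solutions F e P \<theta> \<subseteq> solutions G e P \<theta>"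
  unfolding solutions_def by blast

lemma solutions_insert_const:
  assumes "a \<notin> Domain F" "i \<in> solutions (insert (a, \<lambda>_. f i) F) e P \<theta>"
  shows "i \<in> solutions (insert (a, f) F) e P \<theta>"
proof -
  obtain g where g: "\<forall>v\<in>P. (e v, g v) \<in> insert (a, \<lambda>_. f i) F" "sat Nat_struct (\<lambda>v. g v i) \<theta>"
    using assms(2) unfolding solutions_def by blast
  define g' where "g' v = (if v \<in> P \<and> e v = a then f else g v)" for v
  have "\<forall>v\<in>P. (e v, g' v) \<in> insert (a, f) F"
    using g(1) assms(1) by (auto simp: g'_def)
  moreover have "(\<lambda>v. g' v i) = (\<lambda>v. g v i)"
    using g(1) assms(1) by (fastforce simp: g'_def)
  ultimately show ?thesis
    using g(2) unfolding solutions_def by auto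
qed

lemma preserves_existentials_empty:
  assumes "diophantine_correct M" "is_filter D"
  shows "preserves_existentials M D {}"
  unfolding preserves_existentials_def
proof (intro allI impI)
  fix \<theta> e P assume "sat_over M (Domain {}) \<theta> e P"
  then have "P = {}" and "\<exists>e'. sat Nat_struct e' \<theta>"
    using diophantine_correct_sat_Nat[OF assms(1)] by (auto simp: sat_over_def)
  then have "solutions {} e P \<theta> = UNIV"
    by (auto simp: solutions_def)
  then show "solutions {} e P \<theta> \<in> D"
    using assms(2) unfolding is_filter_def by blast
qed

lemma preserves_existentials_Union_chain:
  assumes fil: "is_filter D" and "C \<noteq> {}" "chain\<^sub>\<subseteq> C"
    and pres: "\<And>F. F \<in> C \<Longrightarrow> preserves_existentials M D F"
  shows "preserves_existentials M D (\<Union>C)"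
  unfolding preserves_existentials_def
proof (intro allI impI)
  fix \<theta> e P assume sat: "sat_over M (Domain (\<Union>C)) \<theta> e P"
  have "Domain F \<subseteq> Domain G \<or> Domain G \<subseteq> Domain F" if "F \<in> C" "G \<in> C" for F G
    using assms(3) that unfolding chain_subset_def by (meson Domain_mono)
  then have chain: "subset.chain UNIV (Domain ` C)"
    unfolding chain_subset_alt_def[symmetric] chain_subset_def by blast
  have "finite (e ` P)" "e ` P \<subseteq> \<Union>(Domain ` C)" "Domain ` C \<noteq> {}"
    using sat assms(2) unfolding sat_over_def Domain_Union by auto
  then obtain B where "B \<in> Domain ` C" "e ` P \<subseteq> B"
    using chain by (rule finite_subset_Union_chain)
  then obtain F where F: "F \<in> C" "e ` P \<subseteq> Domain F"
    by blast
  then have "sat_over M (Domain F) \<theta> e P"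
    using sat unfolding sat_over_def by blast
  then have "solutions F e P \<theta> \<in> D"
    using pres[OF F(1)] unfolding preserves_existentials_def by blast
  moreover have "solutions F e P \<theta> \<subseteq> solutions (\<Union>C) e P \<theta>"
    using F(1) by (intro solutions_mono) blast
  ultimately show "solutions (\<Union>C) e P \<theta> \<in> D"
    using filter_superset[OF fil] by blast
qed

text \<open>Variable v of the k-th formula becomes a fresh variable, except that all variables that
  the k-th assignment sends to a are identified with the variable 0.\<close>
definition merge_var :: "'a \<Rightarrow> (nat \<Rightarrow> nat \<Rightarrow> 'a) \<Rightarrow> nat \<Rightarrow> nat \<Rightarrow> nat" where
  "merge_var a es k v = (if es k v = a then 0 else Suc (prod_encode (k, v)))"

definition merge_assignment :: "'a \<Rightarrow> (nat \<Rightarrow> nat \<Rightarrow> 'a) \<Rightarrow> nat \<Rightarrow> 'a" where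
  "merge_assignment a es w = (if w = 0 then a else case prod_decode (w - 1) of (k, v) \<Rightarrow> es k v)"

definition merge_formula :: "'a \<Rightarrow> (nat \<Rightarrow> nat \<Rightarrow> 'a) \<Rightarrow> (nat \<Rightarrow> la_form) \<Rightarrow> nat \<Rightarrow> la_form" where
  "merge_formula a es \<theta>s n = Conjs (map (\<lambda>k. frename (merge_var a es k) (\<theta>s k)) [0..<Suc n])"

lemma merge_assignment_merge_var: "merge_assignment a es (merge_var a es k v) = es k v"
  by (simp add: merge_assignment_def merge_var_def)

lemma sat_merge_formula:
  assumes "\<And>k. qfree (\<theta>s k)"
  shows "sat M e (merge_formula a es \<theta>s n) \<longleftrightarrow> (\<forall>k\<le>n. sat M (e \<circ> merge_var a es k) (\<theta>s k))"
  unfolding merge_formula_def using assms by (auto simp: sat_Conjs_frename simp del: upt_Suc)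

lemma sat_over_merge_formula:
  fixes es :: "nat \<Rightarrow> nat \<Rightarrow> 'a"
  assumes a: "a \<in> carrier M"
    and conds: "\<And>k. sat_over M (insert a (Domain F)) (\<theta>s k) (es k) (Ps k)"
  shows "sat_over M (Domain F) (merge_formula a es \<theta>s n) (merge_assignment a es)
           {merge_var a es k v | k v. k \<le> n \<and> v \<in> Ps k \<and> es k v \<noteq> a}"
  unfolding sat_over_def
proof (intro conjI)
  have qfree: "qfree (\<theta>s k)" for k
    using conds[of k] by (simp add: sat_over_def)
  then show "qfree (merge_formula a es \<theta>s n)"
    unfolding merge_formula_def by (auto intro!: qfree_Conjs qfree_frename)
  have "{merge_var a es k v | k v. k \<le> n \<and> v \<in> Ps k \<and> es k v \<noteq> a}
          \<subseteq> (\<lambda>(k, v). merge_var a es k v) ` (SIGMA k:{..n}. Ps k)"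
    by auto
  moreover have "finite ((\<lambda>(k, v). merge_var a es k v) ` (SIGMA k:{..n}. Ps k))"
    using conds by (auto simp: sat_over_def)
  ultimately show "finite {merge_var a es k v | k v. k \<le> n \<and> v \<in> Ps k \<and> es k v \<noteq> a}"
    by (rule finite_subset)
  show "\<forall>w. merge_assignment a es w \<in> carrier M"
    using a conds unfolding merge_assignment_def by (simp add: sat_over_def split: prod.split)
  have "merge_assignment a es (merge_var a es k v) \<in> Domain F" if "v \<in> Ps k" "es k v \<noteq> a" for k v
    using conds[of k] that by (auto simp: merge_assignment_merge_var sat_over_def)
  then show "merge_assignment a es ` {merge_var a es k v | k v. k \<le> n \<and> v \<in> Ps k \<and> es k v \<noteq> a}
               \<subseteq> Domain F"
    by auto
  have "sat M (merge_assignment a es \<circ> merge_var a es k) (\<theta>s k)" for k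
    using conds[of k] by (simp add: comp_def merge_assignment_merge_var sat_over_def)
  then show "sat M (merge_assignment a es) (merge_formula a es \<theta>s n)"
    by (simp add: sat_merge_formula qfree)
qed

text \<open>The merged formula is a single condition over dom F; the witness for its variable 0 gives the
  common value c for a.\<close>
lemma preserves_existentials_joint:
  fixes es :: "nat \<Rightarrow> nat \<Rightarrow> 'a"
  assumes pres: "preserves_existentials M D F" and fil: "is_filter D" and a: "a \<in> carrier M"
    and conds: "\<And>k. sat_over M (insert a (Domain F)) (\<theta>s k) (es k) (Ps k)"
  shows "{i. \<exists>c. \<forall>k\<le>n. i \<in> solutions (insert (a, \<lambda>_. c) F) (es k) (Ps k) (\<theta>s k)} \<in> D"
proof -
  define r where "r = merge_var a es"
  define Q where "Q = {r k v | k v. k \<le> n \<and> v \<in> Ps k \<and> es k v \<noteq> a}"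
  have qfree: "qfree (\<theta>s k)" for k
    using conds[of k] by (simp add: sat_over_def)
  have "solutions F (merge_assignment a es) Q (merge_formula a es \<theta>s n) \<in> D"
    using pres sat_over_merge_formula[OF a conds] by (simp add: preserves_existentials_def Q_def r_def)
  moreover have "solutions F (merge_assignment a es) Q (merge_formula a es \<theta>s n)
      \<subseteq> {i. \<exists>c. \<forall>k\<le>n. i \<in> solutions (insert (a, \<lambda>_. c) F) (es k) (Ps k) (\<theta>s k)}"
  proof
    fix i assume "i \<in> solutions F (merge_assignment a es) Q (merge_formula a es \<theta>s n)"
    then obtain g where g: "\<forall>w\<in>Q. (merge_assignment a es w, g w) \<in> F"
        "sat Nat_struct (\<lambda>w. g w i) (merge_formula a es \<theta>s n)"
      unfolding solutions_def by blast
    have "i \<in> solutions (insert (a, \<lambda>_. g 0 i) F) (es k) (Ps k) (\<theta>s k)" if k: "k \<le> n" for k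
    proof -
      define gk where "gk v = (if es k v = a then (\<lambda>_. g 0 i) else g (r k v))" for v
      have "(es k v, gk v) \<in> insert (a, \<lambda>_. g 0 i) F" if "v \<in> Ps k" for v
      proof (cases "es k v = a")
        case False
        then have "r k v \<in> Q"
          using k that unfolding Q_def by blast
        then have "(merge_assignment a es (r k v), g (r k v)) \<in> F"
          using g(1) by blast
        then show ?thesis
          using False by (simp add: gk_def r_def merge_assignment_merge_var)
      qed (simp add: gk_def)
      moreover have "(\<lambda>v. gk v i) = (\<lambda>w. g w i) \<circ> r k"
        by (auto simp: gk_def r_def merge_var_def)
      moreover have "sat Nat_struct ((\<lambda>w. g w i) \<circ> r k) (\<theta>s k)"
        using g(2) k by (simp add: sat_merge_formula qfree r_def)
      ultimately show ?thesis
        unfolding solutions_def by (intro CollectI exI[of _ gk]) auto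
    qed
    then show "i \<in> {i. \<exists>c. \<forall>k\<le>n. i \<in> solutions (insert (a, \<lambda>_. c) F) (es k) (Ps k) (\<theta>s k)}"
      by blast
  qed
  ultimately show ?thesis
    using filter_superset[OF fil] by blast
qed

lemma sat_over_enumeration:
  assumes "countable T" "carrier M \<noteq> {}"
  obtains \<theta>s :: "nat \<Rightarrow> la_form" and es :: "nat \<Rightarrow> nat \<Rightarrow> 'a" and Ps :: "nat \<Rightarrow> nat set"
  where "\<And>n. sat_over M T (\<theta>s n) (es n) (Ps n)"
    and "\<And>\<theta> e P. sat_over M T \<theta> e P \<Longrightarrow> \<exists>n. \<theta>s n = \<theta> \<and> Ps n = P \<and> (\<forall>v\<in>P. es n v = e v)"
proof -
  define agrees where "agrees l e \<longleftrightarrow> (\<forall>(v, c)\<in>set l. e v = c)" for l :: "(nat \<times> 'a) list" and e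
  define K where "K = {(\<theta>, l). l \<in> lists (UNIV \<times> T) \<and> (\<exists>e. sat_over M T \<theta> e (fst ` set l) \<and> agrees l e)}"
  have "countable K"
    by (rule countable_subset[of _ "UNIV \<times> lists (UNIV \<times> T)"]) (auto simp: K_def assms(1))
  moreover obtain c where "c \<in> carrier M"
    using assms(2) by blast
  then have "(Eq Zero Zero, []) \<in> K"
    by (auto simp: K_def agrees_def sat_over_def intro!: exI[of _ "\<lambda>_. c"])
  ultimately have K: "range (from_nat_into K) = K"
    by (intro range_from_nat_into) auto
  define \<theta>s where "\<theta>s n = fst (from_nat_into K n)" for n
  define Ps where "Ps n = fst ` set (snd (from_nat_into K n))" for n
  define es where "es n = (SOME e. sat_over M T (\<theta>s n) e (Ps n) \<and> agrees (snd (from_nat_into K n)) e)" for n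
  have es: "sat_over M T (\<theta>s n) (es n) (Ps n) \<and> agrees (snd (from_nat_into K n)) (es n)" for n
  proof -
    have "from_nat_into K n \<in> K"
      using K by blast
    then have "\<exists>e. sat_over M T (\<theta>s n) e (Ps n) \<and> agrees (snd (from_nat_into K n)) e"
      unfolding \<theta>s_def Ps_def K_def by (cases "from_nat_into K n") auto
    then show ?thesis
      unfolding es_def by (rule someI_ex)
  qed
  show thesis
  proof (rule that)
    show "sat_over M T (\<theta>s n) (es n) (Ps n)" for n
      using es by blast
  next
    fix \<theta> e P assume sat: "sat_over M T \<theta> e P"
    define l where "l = map (\<lambda>v. (v, e v)) (sorted_list_of_set P)"
    have l: "set l = (\<lambda>v. (v, e v)) ` P"
      using sat by (simp add: l_def sat_over_def)
    moreover have "set l \<subseteq> UNIV \<times> T"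
      using l sat by (auto simp: sat_over_def)
    ultimately have "(\<theta>, l) \<in> K"
      using sat by (auto simp: K_def agrees_def image_image intro!: exI[of _ e])
    then obtain n where n: "from_nat_into K n = (\<theta>, l)"
      using K by (metis rangeE)
    have "\<forall>v\<in>P. es n v = e v"
      using es[of n] by (auto simp: n l agrees_def)
    moreover have "\<theta>s n = \<theta>" "Ps n = P"
      by (simp_all add: \<theta>s_def Ps_def n l image_image)
    ultimately show "\<exists>n. \<theta>s n = \<theta> \<and> Ps n = P \<and> (\<forall>v\<in>P. es n v = e v)"
      by blast
  qed
qed

text \<open>The value of the new element at coordinate i is one that works simultaneously for the
  first m i + 1 conditions, where m comes from regularity of D.\<close>
lemma preserves_existentials_extend:
  assumes pres: "preserves_existentials M D F" and reg: "regular_filter D"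
    and "countable (Domain F)" and a: "a \<in> carrier M" "a \<notin> Domain F"
  obtains f where "preserves_existentials M D (insert (a, f) F)"
proof -
  have fil: "is_filter D"
    using reg by (simp add: regular_filter_def)
  have "countable (insert a (Domain F))" "carrier M \<noteq> {}"
    using assms(3) a(1) by auto
  then obtain \<theta>s :: "nat \<Rightarrow> la_form" and es :: "nat \<Rightarrow> nat \<Rightarrow> 'a" and Ps :: "nat \<Rightarrow> nat set"
    where conds: "\<And>k. sat_over M (insert a (Domain F)) (\<theta>s k) (es k) (Ps k)"
    and complete: "\<And>\<theta> e P. sat_over M (insert a (Domain F)) \<theta> e P \<Longrightarrow>
                     \<exists>n. \<theta>s n = \<theta> \<and> Ps n = P \<and> (\<forall>v\<in>P. es n v = e v)"
    by (rule sat_over_enumeration) (rule that)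
  define Y where "Y n = {i. \<exists>c. \<forall>k\<le>n. i \<in> solutions (insert (a, \<lambda>_. c) F) (es k) (Ps k) (\<theta>s k)}" for n
  have Y: "Y n \<in> D" for n
    unfolding Y_def using preserves_existentials_joint[OF pres fil a(1) conds] .
  obtain m where m: "\<And>n. {i. n \<le> m i \<and> i \<in> Y (m i)} \<in> D"
    by (rule regular_filter_diagonal[of D Y, OF reg Y]) (rule that)
  define f where
    "f i = (SOME c. \<forall>k\<le>m i. i \<in> solutions (insert (a, \<lambda>_. c) F) (es k) (Ps k) (\<theta>s k))" for i
  have "preserves_existentials M D (insert (a, f) F)"
    unfolding preserves_existentials_def
  proof (intro allI impI)
    fix \<theta> e P assume "sat_over M (Domain (insert (a, f) F)) \<theta> e P"
    then have "sat_over M (insert a (Domain F)) \<theta> e P"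
      by simp
    then have "\<exists>n. \<theta>s n = \<theta> \<and> Ps n = P \<and> (\<forall>v\<in>P. es n v = e v)"
      by (rule complete)
    then obtain n where n: "\<theta>s n = \<theta>" "Ps n = P" "\<forall>v\<in>P. es n v = e v"
      by blast
    have "{i. n \<le> m i \<and> i \<in> Y (m i)} \<subseteq> solutions (insert (a, f) F) e P \<theta>"
    proof
      fix i assume i: "i \<in> {i. n \<le> m i \<and> i \<in> Y (m i)}"
      then have "\<exists>c. \<forall>k\<le>m i. i \<in> solutions (insert (a, \<lambda>_. c) F) (es k) (Ps k) (\<theta>s k)"
        by (simp add: Y_def)
      then have "\<forall>k\<le>m i. i \<in> solutions (insert (a, \<lambda>_. f i) F) (es k) (Ps k) (\<theta>s k)"
        unfolding f_def by (rule someI_ex)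
      then have "i \<in> solutions (insert (a, \<lambda>_. f i) F) (es n) (Ps n) (\<theta>s n)"
        using i by simp
      then have "i \<in> solutions (insert (a, \<lambda>_. f i) F) e P \<theta>"
        using n solutions_cong[of P "es n" e] by simp
      then show "i \<in> solutions (insert (a, f) F) e P \<theta>"
        using a(2) by (rule solutions_insert_const[rotated])
    qed
    then show "solutions (insert (a, f) F) e P \<theta> \<in> D"
      by (rule filter_superset[OF fil m])
  qed
  then show thesis ..
qed

section \<open>Construction of the embedding\<close>

lemma single_valued_Union_chain:
  assumes "chain\<^sub>\<subseteq> C" "\<And>F. F \<in> C \<Longrightarrow> single_valued F"
  shows "single_valued (\<Union>C)"
  unfolding single_valued_def
proof (intro allI impI)
  fix x y z assume "(x, y) \<in> \<Union>C" "(x, z) \<in> \<Union>C"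
  then obtain F G where FG: "F \<in> C" "G \<in> C" "(x, y) \<in> F" "(x, z) \<in> G"
    by blast
  then have "F \<subseteq> G \<or> G \<subseteq> F"
    using assms(1) unfolding chain_subset_def by blast
  then obtain H where "H \<in> C" "(x, y) \<in> H" "(x, z) \<in> H"
    using FG by blast
  then show "y = z"
    using assms(2) unfolding single_valued_def by blast
qed

lemma countable_underS_card_of:
  assumes "|A| \<le>o cardSuc natLeq" "a \<in> A"
  shows "countable (underS |A| a)"
proof -
  have "|underS |A| a| <o |A|"
    using card_of_underS[OF card_of_Card_order, of a A] assms(2) by (simp add: Field_card_of)
  then have "|underS |A| a| <o cardSuc natLeq"
    using assms(1) ordLess_ordLeq_trans by blast
  then show ?thesis
    by (simp add: cardSuc_ordLeq_ordLess card_of_Card_order natLeq_Card_order countable_card_le_natLeq)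
qed

definition segment_maps ::
    "('a, 'b) la_struct_scheme \<Rightarrow> nat set set \<Rightarrow> 'a rel \<Rightarrow> ('a \<times> (nat \<Rightarrow> nat)) set set" where
  "segment_maps M D W =
     {F. single_valued F \<and> wo_rel.ofilter W (Domain F) \<and> preserves_existentials M D F}"

lemma Union_chain_in_segment_maps:
  assumes "Well_order W" "diophantine_correct M" "is_filter D" "C \<in> chains (segment_maps M D W)"
  shows "\<Union>C \<in> segment_maps M D W"
proof -
  interpret W: wo_rel W
    using assms(1) by (simp add: wo_rel_def)
  have chain: "chain\<^sub>\<subseteq> C" and sub: "C \<subseteq> segment_maps M D W"
    using assms(4) by (auto simp: chains_def)
  show ?thesis
  proof (cases "C = {}")
    case True
    have "W.ofilter {}"
      by (simp add: W.ofilter_def)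
    then show ?thesis
      using True preserves_existentials_empty[OF assms(2,3)] by (simp add: segment_maps_def)
  next
    case False
    have "single_valued (\<Union>C)"
      using chain by (rule single_valued_Union_chain) (use sub in \<open>auto simp: segment_maps_def\<close>)
    moreover have "W.ofilter (Domain (\<Union>C))"
      unfolding Domain_Union using sub by (intro W.ofilter_UNION) (auto simp: segment_maps_def)
    moreover have "preserves_existentials M D (\<Union>C)"
      using assms(3) False chain
      by (rule preserves_existentials_Union_chain) (use sub in \<open>auto simp: segment_maps_def\<close>)
    ultimately show ?thesis
      by (simp add: segment_maps_def)
  qed
qed

text \<open>A map that is not total is defined on a countable segment underS W a, so it extends to a.\<close>
lemma maximal_segment_map_total:
  assumes W: "Well_order W" "Field W = carrier M"
    and countable: "\<And>a. a \<in> carrier M \<Longrightarrow> countable (underS W a)"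
    and reg: "regular_filter D" and F: "F \<in> segment_maps M D W"
    and max: "\<forall>G\<in>segment_maps M D W. F \<subseteq> G \<longrightarrow> G = F"
  shows "Domain F = carrier M"
proof (rule ccontr)
  interpret W: wo_rel W
    using W(1) by (simp add: wo_rel_def)
  assume "Domain F \<noteq> carrier M"
  moreover have "W.ofilter (Domain F)"
    using F by (simp add: segment_maps_def)
  then have "(\<exists>a\<in>Field W. Domain F = underS W a) \<or> Domain F = Field W"
    by (simp only: W.ofilter_underS_Field)
  ultimately obtain a where a: "a \<in> carrier M" "Domain F = underS W a"
    using W(2) by blast
  then have "a \<notin> Domain F"
    by (simp add: underS_notIn)
  have pres: "preserves_existentials M D F"
    using F by (simp add: segment_maps_def)
  have "countable (Domain F)"
    using a countable by simp
  with pres reg obtain f where "preserves_existentials M D (insert (a, f) F)"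
    using a(1) \<open>a \<notin> Domain F\<close> by (rule preserves_existentials_extend) (rule that)
  moreover have "single_valued (insert (a, f) F)"
    using F \<open>a \<notin> Domain F\<close> by (auto simp: segment_maps_def single_valued_def)
  moreover have "Domain (insert (a, f) F) = under W a"
    using a W(2) Refl_under_underS[OF W.REFL, of a] by simp
  ultimately have "insert (a, f) F \<in> segment_maps M D W"
    by (simp add: segment_maps_def W.under_ofilter)
  then show False
    using max \<open>a \<notin> Domain F\<close> by blast
qed

lemma preserves_existentials_total:
  assumes "diophantine_correct M" "regular_filter D" "Well_order W" "Field W = carrier M"
    and "\<And>a. a \<in> carrier M \<Longrightarrow> countable (underS W a)"
  obtains F where "single_valued F" "Domain F = carrier M" "preserves_existentials M D F"
proof -
  have "is_filter D"
    using assms(2) by (simp add: regular_filter_def)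
  then have "\<exists>F\<in>segment_maps M D W. \<forall>G\<in>segment_maps M D W. F \<subseteq> G \<longrightarrow> G = F"
    using assms(1,3) by (intro Zorn_Lemma ballI Union_chain_in_segment_maps)
  then obtain F where F: "F \<in> segment_maps M D W"
    and max: "\<forall>G\<in>segment_maps M D W. F \<subseteq> G \<longrightarrow> G = F"
    by blast
  have "Domain F = carrier M"
    using assms(3,4,5,2) F max by (rule maximal_segment_map_total)
  then show thesis
    using F by (intro that) (auto simp: segment_maps_def)
qed

lemma preserves_existentials_sat_Nat:
  assumes pres: "preserves_existentials M D F" and fil: "is_filter D"
    and dom: "carrier M \<subseteq> Domain F" and graph: "\<And>x y. (x, y) \<in> F \<Longrightarrow> y = h x"
    and sat: "qfree \<theta>" "\<forall>v. e v \<in> carrier M" "sat M e \<theta>"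
  shows "{i. sat Nat_struct (\<lambda>v. h (e v) i) \<theta>} \<in> D"
proof -
  have "e ` fvars \<theta> \<subseteq> Domain F"
    using sat(2) dom by blast
  then have "sat_over M (Domain F) \<theta> e (fvars \<theta>)"
    using sat by (simp add: sat_over_def finite_fvars)
  then have "solutions F e (fvars \<theta>) \<theta> \<in> D"
    using pres by (simp add: preserves_existentials_def)
  moreover have "solutions F e (fvars \<theta>) \<theta> \<subseteq> {i. sat Nat_struct (\<lambda>v. h (e v) i) \<theta>}"
  proof
    fix i assume "i \<in> solutions F e (fvars \<theta>) \<theta>"
    then obtain g where g: "\<forall>v\<in>fvars \<theta>. (e v, g v) \<in> F" "sat Nat_struct (\<lambda>v. g v i) \<theta>"
      unfolding solutions_def by blast
    have "g v = h (e v)" if "v \<in> fvars \<theta>" for v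
      using g(1) that by (blast intro: graph)
    then have "sat Nat_struct (\<lambda>v. g v i) \<theta> = sat Nat_struct (\<lambda>v. h (e v) i) \<theta>"
      by (intro sat_cong) simp
    then show "i \<in> {i. sat Nat_struct (\<lambda>v. h (e v) i) \<theta>}"
      using g(2) by simp
  qed
  ultimately show ?thesis
    using filter_superset[OF fil] by blast
qed

definition la_closed :: "('a, 'b) la_struct_scheme \<Rightarrow> bool" where
  "la_closed M \<longleftrightarrow> zero M \<in> carrier M \<and> one M \<in> carrier M \<and>
     (\<forall>x\<in>carrier M. \<forall>y\<in>carrier M. add M x y \<in> carrier M \<and> mul M x y \<in> carrier M)"

lemma PA_minus_model_la_closed: "PA_minus_model M \<Longrightarrow> la_closed M"
  unfolding PA_minus_model_def la_closed_def by (elim conjE) (intro conjI)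

lemma embeds_into_reduced_power_if_preserves_existentials:
  fixes M :: "('a, 'b) la_struct_scheme"
  assumes "la_closed M"
    and fil: "is_filter D" and pres: "preserves_existentials M D F"
    and dom: "carrier M \<subseteq> Domain F" and graph: "\<And>x y. (x, y) \<in> F \<Longrightarrow> y = h x"
  shows "embeds_into_reduced_power M D h"
proof -
  note closed = \<open>la_closed M\<close>[unfolded la_closed_def]
  note holds = preserves_existentials_sat_Nat[of M D F h, OF pres fil dom graph]
  define pair where "pair x y v = (if v = 0 then x else y)" for x y :: 'a and v :: nat
  have pair: "\<forall>v. pair x y v \<in> carrier M" if "x \<in> carrier M" "y \<in> carrier M" for x y
    using that by (simp add: pair_def)
  show ?thesis
    unfolding embeds_into_reduced_power_def rp_eq_def rp_le_def
  proof (intro conjI ballI impI)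
    fix x y assume xy: "x \<in> carrier M" "y \<in> carrier M" "{n. h x n = h y n} \<in> D"
    show "x = y"
    proof (rule ccontr)
      assume "x \<noteq> y"
      then have "{i. h x i \<noteq> h y i} \<in> D"
        using holds[where \<theta> = "Neg (Eq (Var 0) (Var 1))" and e = "pair x y"] pair xy
        by (simp add: pair_def)
      then show False
        using filter_disjoint[OF fil xy(3)] by blast
    qed
  next
    show "{n. h (zero M) n = 0} \<in> D"
      using holds[where \<theta> = "Eq (Var 0) Zero" and e = "\<lambda>_. zero M"] closed
      by (simp add: Nat_struct_def)
  next
    show "{n. h (one M) n = 1} \<in> D"
      using holds[where \<theta> = "Eq (Var 0) One" and e = "\<lambda>_. one M"] closed
      by (simp add: Nat_struct_def)
  next
    fix x y assume xy: "x \<in> carrier M" "y \<in> carrier M"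
    show "{n. h (add M x y) n = h x n + h y n} \<in> D"
      using holds[where \<theta> = "Eq (Var 0) (Plus (Var 1) (Var 2))"
          and e = "\<lambda>v. if v = 0 then add M x y else pair x y (v - 1)"] closed xy
      by (simp add: pair_def Nat_struct_def)
  next
    fix x y assume xy: "x \<in> carrier M" "y \<in> carrier M"
    show "{n. h (mul M x y) n = h x n * h y n} \<in> D"
      using holds[where \<theta> = "Eq (Var 0) (Times (Var 1) (Var 2))"
          and e = "\<lambda>v. if v = 0 then mul M x y else pair x y (v - 1)"] closed xy
      by (simp add: pair_def Nat_struct_def)
  next
    fix x y assume xy: "x \<in> carrier M" "y \<in> carrier M"
    show "le M x y \<longleftrightarrow> {n. h x n \<le> h y n} \<in> D"
    proof
      assume "le M x y"
      then show "{n. h x n \<le> h y n} \<in> D"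
        using holds[where \<theta> = "Le (Var 0) (Var 1)" and e = "pair x y"] pair xy
        by (simp add: pair_def Nat_struct_def)
    next
      assume le: "{n. h x n \<le> h y n} \<in> D"
      show "le M x y"
      proof (rule ccontr)
        assume "\<not> le M x y"
        then have "{n. \<not> h x n \<le> h y n} \<in> D"
          using holds[where \<theta> = "Neg (Le (Var 0) (Var 1))" and e = "pair x y"] pair xy
          by (simp add: pair_def Nat_struct_def)
        then show False
          using filter_disjoint[OF fil le] by blast
      qed
    qed
  qed
qed

lemma single_valued_eq_SOME: "single_valued F \<Longrightarrow> (x, y) \<in> F \<Longrightarrow> y = (SOME y. (x, y) \<in> F)"
  using someI[of "\<lambda>y. (x, y) \<in> F" y] unfolding single_valued_def by blast

theorem theorem3:
  fixes M :: "'a la_struct" and D :: "nat set set"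
  assumes "PA_minus_model M"
    and "has_card_aleph1 (carrier M)"
    and "diophantine_correct M"
    and "regular_filter D"
  shows "\<exists>h. embeds_into_reduced_power M D h"
proof -
  have "|carrier M| \<le>o cardSuc natLeq"
    using assms(2) by (simp add: has_card_aleph1_def ordIso_iff_ordLeq)
  then have "countable (underS |carrier M| a)" if "a \<in> carrier M" for a
    using that by (rule countable_underS_card_of)
  then obtain F where F: "single_valued F" "Domain F = carrier M" "preserves_existentials M D F"
    by (rule preserves_existentials_total[OF assms(3,4) card_of_Well_order Field_card_of])
  define h where "h x = (SOME y. (x, y) \<in> F)" for x
  have graph: "y = h x" if "(x, y) \<in> F" for x y
    unfolding h_def using F(1) that by (rule single_valued_eq_SOME)
  have "is_filter D" "carrier M \<subseteq> Domain F"
    using assms(4) F(2) by (simp_all add: regular_filter_def)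
  then have "embeds_into_reduced_power M D h"
    using embeds_into_reduced_power_if_preserves_existentials[of M D F h,
        OF PA_minus_model_la_closed[OF assms(1)] _ F(3) _ graph] by blast
  then show ?thesis
    by blast
qed

end
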